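(* Let $A\in\mathrm U(d)$. Then there is a unitary $B\in\mathrm U(d)$ such that $B^2=1_d$ and $\|B-A\|\le\|1_d-A^2\|$ for every unitarily invariant norm $\|\cdot\|$ on $\mathrm M_d(\mathbb C)$.
   Context: A norm $\|\cdot\|$ on $\mathrm M_d(\mathbb C)$ is unitarily invariant if $\|UAV\|=\|A\|$ for all $A\in\mathrm M_d(\mathbb C)$ and $U,V\in\mathrm U(d)$. *)

theory Defs
  imports "Jordan_Normal_Form.Schur_Decomposition"
begin

definition unitary_mat :: "nat \<Rightarrow> complex mat \<Rightarrow> bool" where
  "unitary_mat d U \<longleftrightarrow> U \<in> carrier_mat d d \<and>
     U * mat_adjoint U = 1\<^sub>m d \<and> mat_adjoint U * U = 1\<^sub>m d"

definition is_mat_norm :: "nat \<Rightarrow> (complex mat \<Rightarrow> real) \<Rightarrow> bool" where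
  "is_mat_norm d N \<longleftrightarrow>
     (\<forall>A \<in> carrier_mat d d. N A \<ge> 0) \<and>
     (\<forall>A \<in> carrier_mat d d. N A = 0 \<longleftrightarrow> A = 0\<^sub>m d d) \<and>
     (\<forall>A \<in> carrier_mat d d. \<forall>c. N (c \<cdot>\<^sub>m A) = cmod c * N A) \<and>
     (\<forall>A \<in> carrier_mat d d. \<forall>B \<in> carrier_mat d d. N (A + B) \<le> N A + N B)"

definition unitarily_invariant_norm :: "nat \<Rightarrow> (complex mat \<Rightarrow> real) \<Rightarrow> bool" where
  "unitarily_invariant_norm d N \<longleftrightarrow> is_mat_norm d N \<and>
     (\<forall>A \<in> carrier_mat d d. \<forall>U V. unitary_mat d U \<longrightarrow> unitary_mat d V \<longrightarrow>
        N (U * A * V) = N A)"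

end

theory Submission
  imports Defs "Jordan_Normal_Form.Spectral_Radius"
begin

text \<open>Diagonalise \<open>A = U D U\<^sup>*\<close> with \<open>D = diag(\<lambda>)\<close> and take \<open>B = U diag(\<epsilon>) U\<^sup>*\<close>, where
  \<open>\<epsilon>\<^sub>i = \<plusminus>1\<close> is the sign of \<open>Re \<lambda>\<^sub>i\<close>. Then \<open>\<epsilon>\<^sub>i - \<lambda>\<^sub>i = t\<^sub>i (1 - \<lambda>\<^sub>i\<^sup>2)\<close> with
  \<open>t\<^sub>i = 1 / (1 + \<lambda>\<^sub>i)\<close> or \<open>t\<^sub>i = -1 / (1 - \<lambda>\<^sub>i)\<close>, and \<open>|t\<^sub>i| \<le> 1\<close> since the
  denominator has real part at least 1. So \<open>B - A = U T (1 - D\<^sup>2) U\<^sup>*\<close> for a diagonal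
  contraction \<open>T\<close>, and left multiplication by \<open>T\<close> cannot increase a unitarily invariant
  norm: \<open>T\<close> is a product of contractions acting in a single coordinate, and each of these
  is the average of two diagonal unitaries.\<close>

section \<open>Adjoints and unitary matrices\<close>

lemma mat_adjoint_dim [simp]:
  fixes A :: "complex mat"
  shows "dim_row (mat_adjoint A) = dim_col A" "dim_col (mat_adjoint A) = dim_row A"
  unfolding mat_adjoint_def by auto

lemma mat_adjoint_index [simp]:
  "i < dim_col A \<Longrightarrow> j < dim_row A \<Longrightarrow> mat_adjoint A $$ (i,j) = cnj (A $$ (j,i))"
  unfolding mat_adjoint_def by (simp add: mat_of_rows_index)

lemma mat_adjoint_carrier [simp]:
  "(A :: complex mat) \<in> carrier_mat n m \<Longrightarrow> mat_adjoint A \<in> carrier_mat m n"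
  unfolding carrier_mat_def by auto

lemma mat_adjoint_adjoint [simp]: "mat_adjoint (mat_adjoint A) = (A :: complex mat)"
  by (rule eq_matI) auto

lemma mat_adjoint_mult:
  fixes A B :: "complex mat"
  assumes "A \<in> carrier_mat n k" "B \<in> carrier_mat k m"
  shows "mat_adjoint (A * B) = mat_adjoint B * mat_adjoint A"
  using assms
  by (intro eq_matI) (auto simp: scalar_prod_def sum_conjugate mult.commute intro!: sum.cong)

lemma mat_adjoint_one [simp]: "mat_adjoint (1\<^sub>m n :: complex mat) = 1\<^sub>m n"
  by (rule eq_matI) auto

lemma mat_adjoint_mult_self_index:
  fixes W :: "complex mat"
  shows "i < dim_col W \<Longrightarrow> j < dim_col W \<Longrightarrow>
    (mat_adjoint W * W) $$ (i,j) = col W j \<bullet>c col W i"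
  by (auto simp: scalar_prod_def mult.commute intro!: sum.cong)

lemma cscalar_prod_self:
  "v \<bullet>c v = complex_of_real (\<Sum>k<dim_vec v. (cmod (v $ k))\<^sup>2)"
  by (simp add: scalar_prod_def atLeast0LessThan complex_norm_square del: of_real_power)

lemma mat_diag_dims [simp]: "dim_row (mat_diag n f) = n" "dim_col (mat_diag n f) = n"
  unfolding mat_diag_def by auto

lemma mat_diag_index [simp]:
  "i < n \<Longrightarrow> j < n \<Longrightarrow> mat_diag n f $$ (i,j) = (if i = j then f j else 0)"
  unfolding mat_diag_def by auto

lemma mat_diag_cong: "(\<And>i. i < n \<Longrightarrow> f i = g i) \<Longrightarrow> mat_diag n f = mat_diag n g"
  by (rule eq_matI) (auto simp: mat_diag_def)

lemma mat_diag_minus: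
  fixes f g :: "nat \<Rightarrow> 'a :: ab_group_add"
  shows "mat_diag n f - mat_diag n g = mat_diag n (\<lambda>i. f i - g i)"
  by (rule eq_matI) (auto simp: mat_diag_def)

lemma mat_adjoint_mat_diag [simp]: "mat_adjoint (mat_diag n f) = mat_diag n (\<lambda>i. cnj (f i))"
  by (rule eq_matI) (auto simp: mat_diag_def)

lemma unitary_mat_carrier: "unitary_mat n U \<Longrightarrow> U \<in> carrier_mat n n"
  unfolding unitary_mat_def by auto

lemma unitary_matI:
  assumes "U \<in> carrier_mat n n" "mat_adjoint U * U = 1\<^sub>m n"
  shows "unitary_mat n U"
  using assms mat_mult_left_right_inverse[of "mat_adjoint U" n U] unfolding unitary_mat_def by auto

lemma unitary_mat_iff_adjoint_mult:
  "unitary_mat n U \<longleftrightarrow> U \<in> carrier_mat n n \<and> mat_adjoint U * U = 1\<^sub>m n"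
  using unitary_matI[of U n] unfolding unitary_mat_def by blast

lemma unitary_mat_one: "unitary_mat n (1\<^sub>m n)"
  by (rule unitary_matI) auto

lemma unitary_mat_adjoint: "unitary_mat n U \<Longrightarrow> unitary_mat n (mat_adjoint U)"
  unfolding unitary_mat_def by auto

lemma unitary_mat_mult:
  assumes U: "unitary_mat n U" and V: "unitary_mat n V"
  shows "unitary_mat n (U * V)"
proof -
  have [simp]: "U \<in> carrier_mat n n" "V \<in> carrier_mat n n" "U * V \<in> carrier_mat n n"
    using unitary_mat_carrier[OF U] unitary_mat_carrier[OF V] by auto
  have "mat_adjoint (U * V) * (U * V) = mat_adjoint V * (mat_adjoint U * (U * V))"
    by (simp add: mat_adjoint_mult[of _ n n _ n] assoc_mult_mat[of _ n n _ n _ n])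
  also have "mat_adjoint U * (U * V) = (mat_adjoint U * U) * V"
    by (rule assoc_mult_mat[symmetric, of _ n n _ n _ n]) auto
  also have "mat_adjoint V * (\<dots>) = 1\<^sub>m n"
    using U V unfolding unitary_mat_def by (simp add: left_mult_one_mat[of _ n n])
  finally show ?thesis by (intro unitary_matI) simp_all
qed

lemma unitary_mat_diag:
  assumes "\<And>i. i < n \<Longrightarrow> cmod (f i) = 1"
  shows "unitary_mat n (mat_diag n f)"
proof (rule unitary_matI)
  have "cnj (f i) * f i = 1" if "i < n" for i
    using assms[OF that] by (simp add: mult.commute flip: complex_norm_square)
  then show "mat_adjoint (mat_diag n f) * mat_diag n f = 1\<^sub>m n"
    by (simp flip: mat_diag_one cong: mat_diag_cong)
qed simp

lemma unitary_conj_mult: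
  assumes U: "unitary_mat n U" and X: "X \<in> carrier_mat n n" and Y: "Y \<in> carrier_mat n n"
  shows "(U * X * mat_adjoint U) * (U * Y * mat_adjoint U) = U * (X * Y) * mat_adjoint U"
proof -
  have Uc: "U \<in> carrier_mat n n" and UU: "mat_adjoint U * U = 1\<^sub>m n"
    using U unfolding unitary_mat_def by auto
  have "(U * X * mat_adjoint U) * (U * Y * mat_adjoint U)
      = U * (X * ((mat_adjoint U * U) * (Y * mat_adjoint U)))"
    using Uc X Y by (simp add: assoc_mult_mat[of _ n n _ n _ n] mult_carrier_mat)
  also have "\<dots> = U * (X * Y) * mat_adjoint U"
    using Uc X Y by (simp add: UU assoc_mult_mat[of _ n n _ n _ n] mult_carrier_mat)
  finally show ?thesis .
qed

lemma unitary_conj_minus: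
  assumes U: "unitary_mat n U" and X: "X \<in> carrier_mat n n" and Y: "Y \<in> carrier_mat n n"
  shows "U * X * mat_adjoint U - U * Y * mat_adjoint U = U * (X - Y) * mat_adjoint U"
  using unitary_mat_carrier[OF U] X Y
  by (simp add: mult_minus_distrib_mat minus_mult_distrib_mat[of _ n n _ _ n])

lemma unitary_conj_one: "unitary_mat n U \<Longrightarrow> U * 1\<^sub>m n * mat_adjoint U = 1\<^sub>m n"
  unfolding unitary_mat_def by auto

lemma unitary_conj_one_minus_square:
  assumes U: "unitary_mat n U" and X: "X \<in> carrier_mat n n"
  shows "1\<^sub>m n - (U * X * mat_adjoint U) * (U * X * mat_adjoint U)
    = U * (1\<^sub>m n - X * X) * mat_adjoint U"
proof -
  have "U * (1\<^sub>m n - X * X) * mat_adjoint U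
      = U * 1\<^sub>m n * mat_adjoint U - U * (X * X) * mat_adjoint U"
    using X by (simp add: unitary_conj_minus[OF U])
  then show ?thesis by (simp only: unitary_conj_one[OF U] unitary_conj_mult[OF U X X])
qed

lemma unitary_conj_cancel:
  assumes W: "unitary_mat n W" and A: "A \<in> carrier_mat n n"
  shows "W * (mat_adjoint W * A * W) * mat_adjoint W = A"
proof -
  have Wc: "W \<in> carrier_mat n n" and WW: "W * mat_adjoint W = 1\<^sub>m n"
    using W unfolding unitary_mat_def by auto
  have "W * (mat_adjoint W * A * W) * mat_adjoint W = (W * mat_adjoint W) * A * (W * mat_adjoint W)"
    using Wc A by (simp add: assoc_mult_mat[of _ n n _ n _ n] mult_carrier_mat[of _ n n])
  then show ?thesis using WW A by simp
qed

section \<open>Unitarily invariant norms and diagonal contractions\<close>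

lemma unitarily_invariant_norm_mult_left:
  assumes N: "unitarily_invariant_norm n N" and U: "unitary_mat n U" and Y: "Y \<in> carrier_mat n n"
  shows "N (U * Y) = N Y"
proof -
  have "N (U * Y * 1\<^sub>m n) = N Y"
    using N U Y unitary_mat_one[of n] unfolding unitarily_invariant_norm_def by blast
  then show ?thesis using unitary_mat_carrier[OF U] Y by simp
qed

lemma unitarily_invariant_norm_conj:
  assumes N: "unitarily_invariant_norm n N" and U: "unitary_mat n U" and Y: "Y \<in> carrier_mat n n"
  shows "N (U * Y * mat_adjoint U) = N Y"
  using N U Y unitary_mat_adjoint[OF U] unfolding unitarily_invariant_norm_def by blast

lemma unit_disc_midpoint:
  assumes "cmod c \<le> 1"
  obtains u v where "cmod u = 1" "cmod v = 1" "c = (u + v) / 2"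
proof -
  define r where "r = sqrt (1 - (cmod c)\<^sup>2)"
  define w where "w = (if c = 0 then 1 else c / complex_of_real (cmod c))"
  have w: "cmod w = 1" "c = w * complex_of_real (cmod c)"
    unfolding w_def by (auto simp: norm_divide)
  have "r\<^sup>2 = 1 - (cmod c)\<^sup>2"
    unfolding r_def using assms by (simp add: abs_square_le_1)
  then have "cmod (Complex (cmod c) r) = 1" "cmod (Complex (cmod c) (- r)) = 1"
    by (auto simp: cmod_def)
  moreover have "c = (w * Complex (cmod c) r + w * Complex (cmod c) (- r)) / 2"
    by (subst w(2)) (simp add: complex_eq_iff field_simps)
  ultimately show ?thesis
    using that[of "w * Complex (cmod c) r" "w * Complex (cmod c) (- r)"] w(1)
    by (simp add: norm_mult)
qed

lemma unitarily_invariant_norm_diag_single_le: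
  assumes N: "unitarily_invariant_norm n N" and Y: "Y \<in> carrier_mat n n" and c: "cmod c \<le> 1"
  shows "N (mat_diag n (\<lambda>i. if i = k then c else 1) * Y) \<le> N Y"
proof -
  let ?D = "\<lambda>z. mat_diag n (\<lambda>i. if i = k then z else 1)"
  obtain u v where u: "cmod u = 1" and v: "cmod v = 1" and cuv: "c = (u + v) / 2"
    using unit_disc_midpoint[OF c] .
  have unitary: "unitary_mat n (?D z)" if "cmod z = 1" for z
    by (rule unitary_mat_diag) (use that in auto)
  have carrier: "?D u * Y \<in> carrier_mat n n" "?D v * Y \<in> carrier_mat n n"
    using mult_carrier_mat[OF mat_diag_dim Y] by auto
  have "?D c * Y = (1/2) \<cdot>\<^sub>m (?D u * Y + ?D v * Y)"
    using Y by (simp add: mat_diag_mult_left) (rule eq_matI, auto simp: cuv field_simps)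
  also have "N \<dots> = 1/2 * N (?D u * Y + ?D v * Y)"
    using N carrier unfolding unitarily_invariant_norm_def is_mat_norm_def by auto
  also have "\<dots> \<le> 1/2 * (N (?D u * Y) + N (?D v * Y))"
    using N carrier unfolding unitarily_invariant_norm_def is_mat_norm_def by auto
  also have "\<dots> = N Y"
    using unitarily_invariant_norm_mult_left[OF N unitary Y] u v by simp
  finally show ?thesis .
qed

lemma unitarily_invariant_norm_diag_le:
  assumes N: "unitarily_invariant_norm n N" and Y: "Y \<in> carrier_mat n n"
    and t: "\<And>i. i < n \<Longrightarrow> cmod (t i) \<le> 1"
  shows "N (mat_diag n t * Y) \<le> N Y"
proof -
  have "N (mat_diag n (\<lambda>i. if i < k then t i else 1) * Y) \<le> N Y"
    if "k \<le> n" "Y \<in> carrier_mat n n" for k Y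
    using that
  proof (induction k arbitrary: Y)
    case 0
    then show ?case by simp
  next
    case (Suc k)
    let ?S = "mat_diag n (\<lambda>i. if i = k then t k else 1)"
    have SY: "?S * Y \<in> carrier_mat n n" using mult_carrier_mat[OF mat_diag_dim Suc.prems(2)] .
    have "mat_diag n (\<lambda>i. if i < Suc k then t i else 1)
        = mat_diag n (\<lambda>i. if i < k then t i else 1) * ?S"
      by (auto intro: mat_diag_cong)
    then have "N (mat_diag n (\<lambda>i. if i < Suc k then t i else 1) * Y)
        = N (mat_diag n (\<lambda>i. if i < k then t i else 1) * (?S * Y))"
      by (simp only: assoc_mult_mat[OF mat_diag_dim mat_diag_dim Suc.prems(2)])
    also have "\<dots> \<le> N (?S * Y)"
      using Suc.IH[OF _ SY] Suc.prems by simp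
    also have "\<dots> \<le> N Y"
      using unitarily_invariant_norm_diag_single_le[OF N Suc.prems(2) t] Suc.prems by simp
    finally show ?case .
  qed
  from this[OF order_refl Y] show ?thesis
    by (simp cong: mat_diag_cong)
qed

section \<open>Diagonalisation of unitary matrices\<close>

lemma mat_adjoint_mult_mat_of_corthogonal_cols:
  fixes ws :: "complex vec list"
  assumes ws: "set ws \<subseteq> carrier_vec n" "corthogonal ws" "length ws = n"
  shows "mat_adjoint (mat_of_cols n ws) * mat_of_cols n ws = mat_diag n (\<lambda>i. ws ! i \<bullet>c ws ! i)"
proof (rule eq_matI)
  fix i j assume "i < dim_row (mat_diag n (\<lambda>i. ws ! i \<bullet>c ws ! i))"
    "j < dim_col (mat_diag n (\<lambda>i. ws ! i \<bullet>c ws ! i))"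
  then have ij: "i < n" "j < n" by auto
  then show "(mat_adjoint (mat_of_cols n ws) * mat_of_cols n ws) $$ (i, j)
      = mat_diag n (\<lambda>i. ws ! i \<bullet>c ws ! i) $$ (i, j)"
    using ws corthogonalD[OF ws(2), of j i]
    by (subst mat_adjoint_mult_self_index) (auto simp: subset_code(1))
qed (use ws in auto)

lemma unitary_mat_first_col:
  assumes v: "v \<in> carrier_vec n" "v \<noteq> 0\<^sub>v n"
  obtains W c where "unitary_mat n W" "c \<noteq> 0" "col W 0 = c \<cdot>\<^sub>v v"
proof -
  interpret cof_vec_space n "TYPE(complex)" .
  have n: "0 < n" using v by (cases n) auto
  define bs where "bs = basis_completion v"
  note bs = basis_completion[OF v, folded bs_def]
  define ws where "ws = gram_schmidt n bs"
  note gs = gram_schmidt_result[OF bs(2) bs(4) bs(5) ws_def]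
  have len: "length ws = n" using gs(4) bs(6) by simp
  have ws_carrier: "ws ! i \<in> carrier_vec n" if "i < n" for i
    using gs(3) len that by auto
  have "ws ! 0 = hd ws" using n len by (cases ws) auto
  also have "hd ws = v"
    unfolding ws_def using bs(6,7) n gram_schmidt_hd[OF v(1)] by (cases bs) auto
  finally have ws0: "ws ! 0 = v" .
  define r where "r i = (\<Sum>k<n. (cmod (ws ! i $ k))\<^sup>2)" for i
  have r: "ws ! i \<bullet>c ws ! i = complex_of_real (r i)" "r i > 0" if "i < n" for i
  proof -
    show eq: "ws ! i \<bullet>c ws ! i = complex_of_real (r i)"
      using cscalar_prod_self[of "ws ! i"] ws_carrier[OF that] unfolding r_def by simp
    have "r i \<ge> 0" unfolding r_def by (intro sum_nonneg) auto
    moreover have "ws ! i \<bullet>c ws ! i \<noteq> 0" using corthogonalD[OF gs(2), of i i] len that by auto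
    ultimately show "r i > 0" using eq by auto
  qed
  define s where "s i = complex_of_real (1 / sqrt (r i))" for i
  define W0 where "W0 = mat_of_cols n ws"
  have W0: "W0 \<in> carrier_mat n n" unfolding W0_def using len by auto
  define W where "W = W0 * mat_diag n s"
  have W: "W \<in> carrier_mat n n" unfolding W_def using W0 by auto
  have "mat_adjoint W * W = mat_diag n (\<lambda>i. cnj (s i)) * (mat_adjoint W0 * W0) * mat_diag n s"
    unfolding W_def using W0 mult_carrier_mat[OF mat_adjoint_carrier[OF W0] W0]
    by (simp add: mat_adjoint_mult[of _ n n _ n] assoc_mult_mat[of _ n n _ n _ n])
  also have "mat_adjoint W0 * W0 = mat_diag n (\<lambda>i. complex_of_real (r i))"
    unfolding W0_def using gs(2,3) len by (simp add: mat_adjoint_mult_mat_of_corthogonal_cols r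
        cong: mat_diag_cong)
  also have "mat_diag n (\<lambda>i. cnj (s i)) * \<dots> * mat_diag n s = 1\<^sub>m n"
  proof -
    have "cnj (s i) * complex_of_real (r i) * s i = 1" if "i < n" for i
      using r(2)[OF that] unfolding s_def
      by (simp flip: of_real_mult)
    then show ?thesis by (simp flip: mat_diag_one cong: mat_diag_cong)
  qed
  finally have "unitary_mat n W" using W by (rule unitary_matI[rotated])
  moreover have "col W 0 = s 0 \<cdot>\<^sub>v v"
    unfolding W_def mat_diag_mult_right[OF W0] using n len ws0 v
    by (intro eq_vecI) (auto simp: W0_def mat_of_cols_index mult.commute)
  moreover have "s 0 \<noteq> 0" unfolding s_def using r(2)[OF n] by simp
  ultimately show ?thesis using that by blast
qed

definition corner_block :: "complex \<Rightarrow> complex mat \<Rightarrow> complex mat" where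
  "corner_block a X =
    four_block_mat (mat 1 1 (\<lambda>_. a)) (0\<^sub>m 1 (dim_col X)) (0\<^sub>m (dim_row X) 1) X"

lemma corner_block_dims [simp]:
  "dim_row (corner_block a X) = Suc (dim_row X)" "dim_col (corner_block a X) = Suc (dim_col X)"
  unfolding corner_block_def by auto

lemma corner_block_carrier [simp]:
  "X \<in> carrier_mat m m \<Longrightarrow> corner_block a X \<in> carrier_mat (Suc m) (Suc m)"
  unfolding carrier_mat_def by auto

lemma corner_block_index [simp]:
  "i < Suc (dim_row X) \<Longrightarrow> j < Suc (dim_col X) \<Longrightarrow> corner_block a X $$ (i,j) =
    (if i = 0 \<and> j = 0 then a else if i = 0 \<or> j = 0 then 0 else X $$ (i - 1, j - 1))"
  unfolding corner_block_def by auto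

lemma corner_block_mult:
  assumes X: "X \<in> carrier_mat m m" and Y: "Y \<in> carrier_mat m m"
  shows "corner_block a X * corner_block b Y = corner_block (a * b) (X * Y)"
proof -
  have "corner_block a X * corner_block b Y =
      four_block_mat (mat 1 1 (\<lambda>_. a) * mat 1 1 (\<lambda>_. b) + 0\<^sub>m 1 m * 0\<^sub>m m 1)
        (mat 1 1 (\<lambda>_. a) * 0\<^sub>m 1 m + 0\<^sub>m 1 m * Y)
        (0\<^sub>m m 1 * mat 1 1 (\<lambda>_. b) + X * 0\<^sub>m m 1)
        (0\<^sub>m m 1 * 0\<^sub>m 1 m + X * Y)"
    unfolding corner_block_def using X Y by (subst mult_four_block_mat[of _ 1 1 _ m _ m]) auto
  also have "\<dots> = corner_block (a * b) (X * Y)"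
    unfolding corner_block_def using X Y
    by (intro cong_four_block_mat eq_matI) (auto simp: scalar_prod_def)
  finally show ?thesis .
qed

lemma mat_adjoint_corner_block: "mat_adjoint (corner_block a X) = corner_block (cnj a) (mat_adjoint X)"
  by (rule eq_matI) auto

lemma corner_block_one: "corner_block 1 (1\<^sub>m m) = 1\<^sub>m (Suc m)"
  by (rule eq_matI) auto

lemma corner_block_mat_diag:
  "corner_block a (mat_diag m f) = mat_diag (Suc m) (\<lambda>i. if i = 0 then a else f (i - 1))"
  by (rule eq_matI) auto

lemma corner_block_eq_one_iff:
  assumes "X \<in> carrier_mat m m"
  shows "corner_block a X = 1\<^sub>m (Suc m) \<longleftrightarrow> a = 1 \<and> X = 1\<^sub>m m"
proof
  assume eq: "corner_block a X = 1\<^sub>m (Suc m)"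
  have "corner_block a X $$ (Suc i, Suc j) = 1\<^sub>m (Suc m) $$ (Suc i, Suc j)"
    if "i < m" "j < m" for i j
    using eq by simp
  then have "X = 1\<^sub>m m" using assms by (intro eq_matI) auto
  moreover have "a = 1" using arg_cong[OF eq, of "\<lambda>M. M $$ (0,0)"] assms by simp
  ultimately show "a = 1 \<and> X = 1\<^sub>m m" by simp
qed (simp add: corner_block_one)

lemma unitary_mat_corner_block:
  assumes X: "X \<in> carrier_mat m m"
  shows "unitary_mat (Suc m) (corner_block a X) \<longleftrightarrow> cmod a = 1 \<and> unitary_mat m X"
proof -
  have "mat_adjoint (corner_block a X) * corner_block a X = corner_block (cnj a * a) (mat_adjoint X * X)"
    using X by (simp add: mat_adjoint_corner_block corner_block_mult[of _ m])
  also have "\<dots> = 1\<^sub>m (Suc m) \<longleftrightarrow> cnj a * a = 1 \<and> mat_adjoint X * X = 1\<^sub>m m"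
    using corner_block_eq_one_iff[OF mult_carrier_mat[OF mat_adjoint_carrier[OF X] X]] .
  also have "cnj a * a = 1 \<longleftrightarrow> cmod a = 1"
  proof -
    have "cnj a * a = complex_of_real ((cmod a)\<^sup>2)"
      by (simp add: mult.commute complex_norm_square del: of_real_power)
    then show ?thesis
      by (smt (verit) norm_ge_zero of_real_eq_1_iff power2_eq_1_iff)
  qed
  finally show ?thesis
    using X by (simp add: unitary_mat_iff_adjoint_mult)
qed

lemma unitary_mat_row_norm:
  assumes U: "unitary_mat n U" and i: "i < n"
  shows "(\<Sum>k<n. (cmod (U $$ (i,k)))\<^sup>2) = 1"
proof -
  have Uc: "U \<in> carrier_mat n n" using unitary_mat_carrier[OF U] .
  have "complex_of_real (\<Sum>k<n. (cmod (U $$ (i,k)))\<^sup>2) = (U * mat_adjoint U) $$ (i,i)"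
    using Uc i by (auto simp: scalar_prod_def complex_norm_square atLeast0LessThan
        simp del: of_real_power intro!: sum.cong)
  also have "\<dots> = 1" using U i unfolding unitary_mat_def by simp
  finally show ?thesis by (simp only: of_real_eq_1_iff)
qed

lemma unitary_mat_col_norm:
  assumes U: "unitary_mat n U" and j: "j < n"
  shows "(\<Sum>k<n. (cmod (U $$ (k,j)))\<^sup>2) = 1"
  using unitary_mat_row_norm[OF unitary_mat_adjoint[OF U] j] unitary_mat_carrier[OF U] j
  by simp

lemma unitary_mat_eq_corner_block:
  assumes B: "unitary_mat (Suc m) B"
    and col0: "\<And>i. i < Suc m \<Longrightarrow> B $$ (i,0) = (if i = 0 then e else 0)"
  shows "B = corner_block e (mat m m (\<lambda>(i,j). B $$ (Suc i, Suc j)))"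
proof -
  have Bc: "B \<in> carrier_mat (Suc m) (Suc m)" using unitary_mat_carrier[OF B] .
  have "(cmod e)\<^sup>2 + (\<Sum>k<m. (cmod (B $$ (0, Suc k)))\<^sup>2)
      = (\<Sum>k<Suc m. (cmod (B $$ (0,k)))\<^sup>2)"
    using col0[of 0] by (subst sum.lessThan_Suc_shift) simp
  also have "\<dots> = (\<Sum>k<Suc m. (cmod (B $$ (k,0)))\<^sup>2)"
    using unitary_mat_row_norm[OF B] unitary_mat_col_norm[OF B] by simp
  also have "\<dots> = (cmod e)\<^sup>2"
    using col0 by (subst sum.lessThan_Suc_shift) simp
  finally have "(\<Sum>k<m. (cmod (B $$ (0, Suc k)))\<^sup>2) = 0" by simp
  then have row0: "B $$ (0, Suc k) = 0" if "k < m" for k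
    using that by (simp add: sum_nonneg_eq_0_iff)
  show ?thesis
    using Bc col0 row0 by (intro eq_matI) (auto simp: gr0_conv_Suc)
qed

lemma unitary_mat_deflate:
  assumes A: "unitary_mat (Suc m) A"
  obtains W e A' where "unitary_mat (Suc m) W" "unitary_mat m A'"
    "mat_adjoint W * A * W = corner_block e A'"
proof -
  have Ac: "A \<in> carrier_mat (Suc m) (Suc m)" using unitary_mat_carrier[OF A] .
  obtain e where "e \<in> spectrum A" using spectrum_non_empty[OF Ac] by auto
  then have "eigenvector A (find_eigenvector A e) e"
    using find_eigenvector[OF Ac] unfolding spectrum_def by auto
  then obtain v where v: "v \<in> carrier_vec (Suc m)" "v \<noteq> 0\<^sub>v (Suc m)"
    and Av: "A *\<^sub>v v = e \<cdot>\<^sub>v v"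
    using Ac unfolding eigenvector_def by auto
  obtain W c where W: "unitary_mat (Suc m) W" and Wcol: "col W 0 = c \<cdot>\<^sub>v v"
    using unitary_mat_first_col[OF v] by blast
  have Wc: "W \<in> carrier_mat (Suc m) (Suc m)" using unitary_mat_carrier[OF W] .
  define B where "B = mat_adjoint W * A * W"
  have B: "unitary_mat (Suc m) B"
    unfolding B_def by (intro unitary_mat_mult unitary_mat_adjoint W A)
  have "col (A * W) 0 = A *\<^sub>v col W 0" by (rule col_mult2[OF Ac Wc]) simp
  also have "\<dots> = c \<cdot>\<^sub>v (A *\<^sub>v v)" unfolding Wcol using Ac v by (simp add: mult_mat_vec)
  also have "\<dots> = e \<cdot>\<^sub>v col W 0" unfolding Av Wcol by (simp add: smult_smult_assoc mult.commute)
  finally have AW: "col (A * W) 0 = e \<cdot>\<^sub>v col W 0" .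
  have "col B 0 = mat_adjoint W *\<^sub>v col (A * W) 0"
    unfolding B_def using Ac Wc
    by (simp add: assoc_mult_mat[of _ "Suc m" "Suc m" _ "Suc m" _ "Suc m"]
        col_mult2[of _ "Suc m" "Suc m" _ "Suc m"])
  also have "\<dots> = e \<cdot>\<^sub>v col (mat_adjoint W * W) 0"
    unfolding AW using Wc carrier_vecI[of "col W 0" "Suc m"]
    by (simp add: mult_mat_vec[of _ "Suc m" "Suc m"] col_mult2[of _ "Suc m" "Suc m" _ "Suc m"])
  also have "mat_adjoint W * W = 1\<^sub>m (Suc m)" using W unfolding unitary_mat_def by simp
  finally have colB: "col B 0 = e \<cdot>\<^sub>v unit_vec (Suc m) 0" by simp
  have "B $$ (i,0) = (if i = 0 then e else 0)" if "i < Suc m" for i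
    using arg_cong[OF colB, of "\<lambda>x. x $ i"] that unitary_mat_carrier[OF B] by auto
  then have "B = corner_block e (mat m m (\<lambda>(i,j). B $$ (Suc i, Suc j)))"
    by (rule unitary_mat_eq_corner_block[OF B])
  moreover have "unitary_mat m (mat m m (\<lambda>(i,j). B $$ (Suc i, Suc j)))"
    using B calculation unitary_mat_corner_block by (metis mat_carrier)
  ultimately show ?thesis using that W unfolding B_def by metis
qed

lemma unitary_mat_diagonalization:
  "unitary_mat n A \<Longrightarrow> \<exists>U f. unitary_mat n U \<and> A = U * mat_diag n f * mat_adjoint U"
proof (induction n arbitrary: A)
  case 0
  then have "A = 1\<^sub>m 0 * mat_diag 0 f * mat_adjoint (1\<^sub>m 0)" for f
    using unitary_mat_carrier[OF "0"] by (intro eq_matI) auto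
  then show ?case using unitary_mat_one by blast
next
  case (Suc m)
  obtain W e A' where W: "unitary_mat (Suc m) W" and A': "unitary_mat m A'"
    and WAW: "mat_adjoint W * A * W = corner_block e A'"
    using unitary_mat_deflate[OF Suc.prems] .
  obtain U' f where U': "unitary_mat m U'" and A'_eq: "A' = U' * mat_diag m f * mat_adjoint U'"
    using Suc.IH[OF A'] by blast
  have U'c: "U' \<in> carrier_mat m m" using unitary_mat_carrier[OF U'] .
  define L where "L = corner_block 1 U'"
  define g where "g i = (if i = 0 then e else f (i - 1))" for i
  have L: "unitary_mat (Suc m) L"
    unfolding L_def using U' U'c by (simp add: unitary_mat_corner_block)
  have "corner_block e A' = L * mat_diag (Suc m) g * mat_adjoint L"
    unfolding A'_eq L_def g_def using U'c
    by (simp add: mat_adjoint_corner_block corner_block_mult[of _ m] flip: corner_block_mat_diag)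
  then have "A = W * (L * mat_diag (Suc m) g * mat_adjoint L) * mat_adjoint W"
    using unitary_conj_cancel[OF W unitary_mat_carrier[OF Suc.prems]] WAW by simp
  also have "\<dots> = (W * L) * mat_diag (Suc m) g * mat_adjoint (W * L)"
    using unitary_mat_carrier[OF W] unitary_mat_carrier[OF L]
    by (simp add: mat_adjoint_mult[of _ "Suc m" "Suc m" _ "Suc m"]
        assoc_mult_mat[of _ "Suc m" "Suc m" _ "Suc m" _ "Suc m"] mult_carrier_mat[of _ "Suc m" "Suc m"])
  finally show ?case using unitary_mat_mult[OF W L] by blast
qed

section \<open>The sign of the real part\<close>

definition re_sign :: "complex \<Rightarrow> complex" where
  "re_sign z = (if 0 \<le> Re z then 1 else -1)"

definition re_sign_quotient :: "complex \<Rightarrow> complex" where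
  "re_sign_quotient z = (if 0 \<le> Re z then 1 / (1 + z) else - 1 / (1 - z))"

lemma re_sign_mult_self: "re_sign z * re_sign z = 1"
  by (simp add: re_sign_def)

lemma re_sign_minus_eq: "re_sign z - z = re_sign_quotient z * (1 - z * z)"
proof -
  have "1 - z * z = (1 - z) * (1 + z)" by (simp add: algebra_simps)
  moreover have "0 \<le> Re z \<Longrightarrow> 1 + z \<noteq> 0" "\<not> 0 \<le> Re z \<Longrightarrow> 1 - z \<noteq> 0"
    by (auto simp: complex_eq_iff)
  ultimately show ?thesis
    unfolding re_sign_def re_sign_quotient_def by (auto simp: field_simps)
qed

lemma norm_re_sign_quotient_le: "cmod (re_sign_quotient z) \<le> 1"
proof -
  have "1 \<le> cmod w" if "1 \<le> Re w" for w
    using that complex_Re_le_cmod[of w] by linarith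
  from this[of "1 + z"] this[of "1 - z"] show ?thesis
    unfolding re_sign_quotient_def by (auto simp: norm_divide divide_le_eq)
qed

lemma unitarily_invariant_norm_re_sign_diag_le:
  assumes N: "unitarily_invariant_norm n N"
  shows "N (mat_diag n (\<lambda>i. re_sign (f i)) - mat_diag n f)
    \<le> N (1\<^sub>m n - mat_diag n f * mat_diag n f)"
proof -
  have "mat_diag n (\<lambda>i. re_sign (f i)) - mat_diag n f
      = mat_diag n (\<lambda>i. re_sign_quotient (f i)) * (1\<^sub>m n - mat_diag n f * mat_diag n f)"
    by (simp add: mat_diag_minus re_sign_minus_eq flip: mat_diag_one)
  moreover have "1\<^sub>m n - mat_diag n f * mat_diag n f \<in> carrier_mat n n" by auto
  ultimately show ?thesis
    using unitarily_invariant_norm_diag_le[OF N _ norm_re_sign_quotient_le] by simp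
qed

theorem proposition1p4:
  fixes d :: nat and A :: "complex mat"
  assumes "unitary_mat d A"
  shows "\<exists>B. unitary_mat d B \<and> B * B = 1\<^sub>m d \<and>
           (\<forall>N. unitarily_invariant_norm d N \<longrightarrow> N (B - A) \<le> N (1\<^sub>m d - A * A))"
proof -
  obtain U f where U: "unitary_mat d U" and A: "A = U * mat_diag d f * mat_adjoint U"
    using unitary_mat_diagonalization[OF assms] by blast
  define E where "E = mat_diag d (\<lambda>i. re_sign (f i))"
  define B where "B = U * E * mat_adjoint U"
  have "unitary_mat d E"
    unfolding E_def by (rule unitary_mat_diag) (simp add: re_sign_def)
  then have "unitary_mat d B"
    unfolding B_def by (intro unitary_mat_mult unitary_mat_adjoint U)
  moreover have "E * E = 1\<^sub>m d"
    unfolding E_def by (simp add: re_sign_mult_self flip: mat_diag_one)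
  then have "B * B = 1\<^sub>m d"
    unfolding B_def using E_def by (simp add: unitary_conj_mult[OF U] unitary_conj_one[OF U])
  moreover have "N (B - A) \<le> N (1\<^sub>m d - A * A)" if N: "unitarily_invariant_norm d N" for N
  proof -
    have "N (B - A) = N (E - mat_diag d f)"
      unfolding A B_def E_def using unitarily_invariant_norm_conj[OF N U]
      by (simp add: unitary_conj_minus[OF U] mat_diag_minus)
    also have "\<dots> \<le> N (1\<^sub>m d - mat_diag d f * mat_diag d f)"
      unfolding E_def by (rule unitarily_invariant_norm_re_sign_diag_le[OF N])
    also have "\<dots> = N (1\<^sub>m d - A * A)"
      unfolding A unitary_conj_one_minus_square[OF U mat_diag_dim]
      by (rule unitarily_invariant_norm_conj[OF N U, symmetric]) auto
    finally show ?thesis .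
  qed
  ultimately show ?thesis by blast
qed

end
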